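(* Let $B=(\tilde U\dot\cup U,E)$ and $B'=(\tilde U\dot\cup U,E')$ be bipartite graphs with $|U|\ge|\tilde U|$ and $\mathrm{nd}_{\tilde U}(B,B')\le s$. If there are positive integers $x,n_1,n_2,n_3$ such that (i) $\deg_{B'}(\tilde u)\ge n_1$ for all $\tilde u\in\tilde U$, (ii) $|N_{B'}(\tilde S)|\ge x|\tilde S|$ for all $\tilde S\subseteq\tilde U$ with $|\tilde S|\le n_2$, (iii) $e_{B'}(\tilde S,S)\le\frac{n_1}{n_3}|\tilde S||S|$ for all $\tilde S\subseteq\tilde U$, $S\subseteq U$ with $xn_2\le|S|<|\tilde S|<n_3$, (iv) $|N_B(S)\cap\tilde S|>s$ for all $\tilde S\subseteq\tilde U$, $S\subseteq U$ with $|\tilde S|\ge n_3$ and $|S|>|U|-|\tilde S|$, then $B'$ has a matching covering $\tilde U$.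
   Context: For bipartite graphs $B,B'$ on the same vertex set $\tilde U\dot\cup U$, $\mathrm{nd}_{\tilde U}(B,B')$ is the number of vertices $\tilde u\in\tilde U$ with $N_B(\tilde u)\ne N_{B'}(\tilde u)$. $N_B(S)$ denotes the set of vertices with a neighbour in $S$, and $e_{B'}(\tilde S,S)$ the number of edges of $B'$ between $\tilde S$ and $S$. *)

theory Defs
  imports Complex_Main
begin

text \<open>A bipartite graph on the vertex set Ut (disjoint union) U is given by its edge set
  E :: ('a * 'b) set with E a subset of Ut x U; the two sides live in different types,
  so the union is automatically disjoint.\<close>

definition bip_graph :: "'a set \<Rightarrow> 'b set \<Rightarrow> ('a \<times> 'b) set \<Rightarrow> bool" where
  "bip_graph Ut U E \<longleftrightarrow> finite Ut \<and> finite U \<and> E \<subseteq> Ut \<times> U"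

definition nbr :: "('a \<times> 'b) set \<Rightarrow> 'a \<Rightarrow> 'b set" where
  "nbr E a = {b. (a, b) \<in> E}"

definition nbrL :: "('a \<times> 'b) set \<Rightarrow> 'a set \<Rightarrow> 'b set" where
  "nbrL E St = {b. \<exists>a\<in>St. (a, b) \<in> E}"

definition nbrR :: "('a \<times> 'b) set \<Rightarrow> 'b set \<Rightarrow> 'a set" where
  "nbrR E S = {a. \<exists>b\<in>S. (a, b) \<in> E}"

definition deg :: "('a \<times> 'b) set \<Rightarrow> 'a \<Rightarrow> nat" where
  "deg E a = card (nbr E a)"

definition nd :: "'a set \<Rightarrow> ('a \<times> 'b) set \<Rightarrow> ('a \<times> 'b) set \<Rightarrow> nat" where
  "nd Ut E E' = card {a \<in> Ut. nbr E a \<noteq> nbr E' a}"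

definition edges_between :: "('a \<times> 'b) set \<Rightarrow> 'a set \<Rightarrow> 'b set \<Rightarrow> nat" where
  "edges_between E St S = card {(a, b) \<in> E. a \<in> St \<and> b \<in> S}"

definition has_matching_covering :: "('a \<times> 'b) set \<Rightarrow> 'a set \<Rightarrow> bool" where
  "has_matching_covering E Ut \<longleftrightarrow>
     (\<exists>M \<subseteq> E. (\<forall>(a, b) \<in> M. \<forall>(a', b') \<in> M. (a, b) \<noteq> (a', b') \<longrightarrow> a \<noteq> a' \<and> b \<noteq> b')
              \<and> Ut \<subseteq> fst ` M)"

end

theory Submission
  imports Defs
begin

text \<open>By Hall's theorem it suffices that every St \<subseteq> Ut has at least |St|
  neighbours in B'. Small sets expand by (ii). For medium sets with fewer neighbours than
  elements, (ii) applied to a subset of size n2 shows that the neighbourhood N is large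
  enough for (iii), and then the minimum degree (i) forces |N| \<ge> n3, contradicting
  |N| < |St| < n3. For a large set St with neighbourhood N, condition (iv) applied to
  U - N gives more than s vertices of St with a B-neighbour outside N; these have
  different neighbourhoods in B and B', contradicting nd \<le> s.\<close>

definition hall_condition :: "('a \<times> 'b) set \<Rightarrow> 'a set \<Rightarrow> bool" where
  "hall_condition E A \<longleftrightarrow> (\<forall>S\<subseteq>A. card S \<le> card (nbrL E S))"

lemma finite_nbrL: "finite E \<Longrightarrow> finite (nbrL E S)"
  by (rule finite_subset[of _ "snd ` E"]) (force simp: nbrL_def)+

lemma finite_edges_restrict: "finite E \<Longrightarrow> finite {(a, b) \<in> E. P a b}"
  by (rule finite_subset[of _ E]) auto

lemma nbrL_mono: "E \<subseteq> F \<Longrightarrow> S \<subseteq> T \<Longrightarrow> nbrL E S \<subseteq> nbrL F T"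
  by (auto simp: nbrL_def)

lemma hall_condition_subset: "hall_condition E A \<Longrightarrow> S \<subseteq> A \<Longrightarrow> hall_condition E S"
  by (simp add: hall_condition_def)

lemma hall_condition_remove_tight_set:
  assumes hall: "hall_condition E A" and "finite A" "finite E"
    and S: "S \<subseteq> A" "card (nbrL E S) \<le> card S"
  shows "hall_condition {(a, b) \<in> E. b \<notin> nbrL E S} (A - S)"
  unfolding hall_condition_def
proof (intro allI impI)
  fix T assume T: "T \<subseteq> A - S"
  let ?E = "{(a, b) \<in> E. b \<notin> nbrL E S}"
  have "finite (A - S)" "finite S" using S(1) \<open>finite A\<close> by (auto intro: finite_subset)
  then have "card T + card S = card (T \<union> S)"
    using T by (metis card_Un_disjoint disjoint_iff Diff_iff finite_subset subset_iff)
  also have "\<dots> \<le> card (nbrL E (T \<union> S))"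
    using hall T S(1) unfolding hall_condition_def by (meson Diff_subset Un_subset_iff order_trans)
  also have "\<dots> \<le> card (nbrL ?E T \<union> nbrL E S)"
  proof (rule card_mono)
    show "finite (nbrL ?E T \<union> nbrL E S)"
      using \<open>finite E\<close> by (simp add: finite_nbrL finite_edges_restrict)
  qed (auto simp: nbrL_def)
  also have "\<dots> \<le> card (nbrL ?E T) + card S"
    using card_Un_le[of "nbrL ?E T" "nbrL E S"] S by linarith
  finally show "card T \<le> card (nbrL ?E T)" by linarith
qed

lemma hall_condition_remove_edge:
  assumes hall: "hall_condition E A" and "finite E"
    and surplus: "\<And>S. S \<subseteq> A \<Longrightarrow> S \<noteq> {} \<Longrightarrow> S \<noteq> A \<Longrightarrow> card S < card (nbrL E S)"
    and "a \<in> A"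
  shows "hall_condition {(a', b'). (a', b') \<in> E \<and> b' \<noteq> b} (A - {a})"
  unfolding hall_condition_def
proof (intro allI impI)
  fix T assume T: "T \<subseteq> A - {a}"
  let ?E = "{(a', b'). (a', b') \<in> E \<and> b' \<noteq> b}"
  show "card T \<le> card (nbrL ?E T)"
  proof (cases "T = {}")
    case False
    then have "card T < card (nbrL E T)" using surplus[of T] T \<open>a \<in> A\<close> by blast
    also have "\<dots> \<le> card (insert b (nbrL ?E T))"
    proof (rule card_mono)
      show "finite (insert b (nbrL ?E T))"
        using \<open>finite E\<close> by (simp add: finite_nbrL finite_edges_restrict)
    qed (auto simp: nbrL_def)
    also have "\<dots> \<le> card (nbrL ?E T) + 1"
      by (simp add: card_insert_le_m1)
    finally show ?thesis by linarith
  qed simp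
qed

text \<open>The induction follows Halmos and Vaughan: either some proper nonempty subset S is tight,
  and S and its complement (with the neighbours of S deleted) are matched separately, or every
  such subset has surplus, and an arbitrary edge at some vertex can be fixed.\<close>

theorem hall_marriage:
  assumes "finite A" "finite E" "hall_condition E A"
  shows "\<exists>f. inj_on f A \<and> (\<forall>a\<in>A. (a, f a) \<in> E)"
  using assms
proof (induction "card A" arbitrary: A E rule: less_induct)
  case less
  show ?case
  proof (cases "\<exists>S. S \<subseteq> A \<and> S \<noteq> {} \<and> S \<noteq> A \<and> card (nbrL E S) \<le> card S")
    case True
    then obtain S where S: "S \<subseteq> A" "S \<noteq> {}" "S \<noteq> A" "card (nbrL E S) \<le> card S"
      by blast
    let ?E = "{(a, b) \<in> E. b \<notin> nbrL E S}"
    have "finite S" "finite (A - S)" using S(1) less.prems(1) by (auto intro: finite_subset)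
    have "card S < card A" using S(1,3) less.prems(1) by (simp add: psubset_card_mono)
    then obtain f where f: "inj_on f S" "\<forall>a\<in>S. (a, f a) \<in> E"
      using less.hyps \<open>finite S\<close> less.prems(2) hall_condition_subset[OF less.prems(3) S(1)]
      by blast
    have "card (A - S) < card A" using S(1,2) less.prems(1) by (auto intro: psubset_card_mono)
    moreover have "finite ?E" using less.prems(2) by (rule finite_edges_restrict)
    ultimately obtain g where g: "inj_on g (A - S)" "\<forall>a\<in>A - S. (a, g a) \<in> ?E"
      using less.hyps \<open>finite (A - S)\<close> hall_condition_remove_tight_set[OF less.prems(3,1,2) S(1,4)]
      by blast
    have "\<forall>a\<in>S. f a \<in> nbrL E S" "\<forall>a\<in>A - S. g a \<notin> nbrL E S"
      using f(2) g(2) by (auto simp: nbrL_def)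
    with f(1) g(1) have "inj_on (\<lambda>a. if a \<in> S then f a else g a) A"
      unfolding inj_on_def by (metis DiffI)
    moreover have "\<forall>a\<in>A. (a, if a \<in> S then f a else g a) \<in> E"
      using f(2) g(2) by auto
    ultimately show ?thesis by blast
  next
    case False
    show ?thesis
    proof (cases "A = {}")
      case nonempty: False
      then obtain a where "a \<in> A" by blast
      with less.prems(3) have "card {a} \<le> card (nbrL E {a})"
        unfolding hall_condition_def by blast
      then obtain b where b: "(a, b) \<in> E" by (fastforce simp: nbrL_def)
      let ?E = "{(a', b'). (a', b') \<in> E \<and> b' \<noteq> b}"
      have surplus: "card S < card (nbrL E S)" if "S \<subseteq> A" "S \<noteq> {}" "S \<noteq> A" for S
        using False that not_le by blast
      have "hall_condition ?E (A - {a})"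
        using hall_condition_remove_edge[OF less.prems(3,2) surplus \<open>a \<in> A\<close>] .
      moreover have "card (A - {a}) < card A" using less.prems(1) \<open>a \<in> A\<close> by (rule card_Diff1_less)
      moreover have "finite (A - {a})" "finite ?E"
        using less.prems(1,2) by (auto intro: finite_edges_restrict)
      ultimately obtain g where g: "inj_on g (A - {a})" "\<forall>a'\<in>A - {a}. (a', g a') \<in> ?E"
        using less.hyps by blast
      have "\<forall>a'\<in>A - {a}. g a' \<noteq> b" using g(2) by auto
      with g(1) have "inj_on (g(a := b)) A"
        unfolding inj_on_def by (metis DiffI fun_upd_apply singletonD)
      moreover have "\<forall>a'\<in>A. (a', (g(a := b)) a') \<in> E"
        using g(2) b by auto
      ultimately show ?thesis by blast
    qed simp
  qed
qed

lemma has_matching_covering_if_inj_on: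
  assumes "inj_on f A" "\<forall>a\<in>A. (a, f a) \<in> E"
  shows "has_matching_covering E A"
  unfolding has_matching_covering_def
proof (intro exI conjI)
  show "(\<lambda>a. (a, f a)) ` A \<subseteq> E" using assms(2) by auto
  show "\<forall>(a, b) \<in> (\<lambda>a. (a, f a)) ` A. \<forall>(a', b') \<in> (\<lambda>a. (a, f a)) ` A.
          (a, b) \<noteq> (a', b') \<longrightarrow> a \<noteq> a' \<and> b \<noteq> b'"
    using assms(1) unfolding inj_on_def by auto
qed force

lemma edges_between_nbrL:
  assumes "finite St" "finite E"
  shows "edges_between E St (nbrL E St) = (\<Sum>a\<in>St. deg E a)"
proof -
  have "{(a, b) \<in> E. a \<in> St \<and> b \<in> nbrL E St} = Sigma St (nbr E)"
    by (auto simp: nbrL_def nbr_def)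
  moreover have "finite (nbr E a)" for a
    using finite_nbrL[OF assms(2), of "{a}"] by (simp add: nbr_def nbrL_def)
  ultimately show ?thesis
    using assms(1) by (simp add: edges_between_def deg_def card_SigmaI)
qed

lemma card_nbrL_ge_if_sparse:
  fixes n1 n3 :: nat
  assumes "finite St" "finite E" "St \<noteq> {}" "n1 > 0"
    and deg: "\<forall>a\<in>St. n1 \<le> deg E a"
    and sparse: "real (edges_between E St (nbrL E St))
                   \<le> real n1 / real n3 * real (card St) * real (card (nbrL E St))"
  shows "n3 \<le> card (nbrL E St)"
proof (rule ccontr)
  assume "\<not> n3 \<le> card (nbrL E St)"
  then have "real (card (nbrL E St)) / real n3 < 1" by simp
  moreover have "real n1 * real (card St) > 0" using assms(1,3,4) by (simp add: card_gt_0_iff)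
  ultimately have "real n1 * real (card St) * (real (card (nbrL E St)) / real n3)
                     < real n1 * real (card St)"
    using mult_strict_left_mono by fastforce
  then have "real n1 / real n3 * real (card St) * real (card (nbrL E St)) < real n1 * real (card St)"
    by simp
  moreover have "n1 * card St \<le> edges_between E St (nbrL E St)"
    using sum_mono[of St "\<lambda>_. n1" "deg E"] deg by (simp add: edges_between_nbrL assms mult.commute)
  then have "real n1 * real (card St) \<le> real (edges_between E St (nbrL E St))"
    by (metis of_nat_le_iff of_nat_mult)
  ultimately show False using sparse by linarith
qed

lemma card_nbrL_ge_if_expanding_subsets:
  assumes "finite St" "finite E" "n \<le> card St"
    and expand: "\<forall>St'\<subseteq>St. card St' \<le> n \<longrightarrow> x * card St' \<le> card (nbrL E St')"
  shows "x * n \<le> card (nbrL E St)"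
proof -
  obtain St' where St': "St' \<subseteq> St" "card St' = n"
    using obtain_subset_with_card_n[OF assms(3)] by blast
  then have "x * n \<le> card (nbrL E St')" using expand by auto
  also have "\<dots> \<le> card (nbrL E St)"
    using St'(1) assms(2) by (intro card_mono nbrL_mono finite_nbrL) auto
  finally show ?thesis .
qed

lemma card_nbrR_outside_le_nd:
  assumes "finite Ut" "St \<subseteq> Ut"
  shows "card (nbrR E (U - nbrL E' St) \<inter> St) \<le> nd Ut E E'"
  unfolding nd_def using assms
  by (intro card_mono) (auto simp: nbrR_def nbrL_def nbr_def)

theorem lemma11p8:
  fixes Ut :: "'a set" and U :: "'b set" and E E' :: "('a \<times> 'b) set"
    and s x n1 n2 n3 :: nat
  assumes B: "bip_graph Ut U E" and B': "bip_graph Ut U E'"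
    and sizes: "card U \<ge> card Ut"
    and nd: "nd Ut E E' \<le> s"
    and pos: "x > 0" "n1 > 0" "n2 > 0" "n3 > 0"
    and i: "\<forall>a \<in> Ut. deg E' a \<ge> n1"
    and ii: "\<forall>St \<subseteq> Ut. card St \<le> n2 \<longrightarrow> card (nbrL E' St) \<ge> x * card St"
    and iii: "\<forall>St \<subseteq> Ut. \<forall>S \<subseteq> U. x * n2 \<le> card S \<and> card S < card St \<and> card St < n3 \<longrightarrow>
                real (edges_between E' St S) \<le> real n1 / real n3 * real (card St) * real (card S)"
    and iv: "\<forall>St \<subseteq> Ut. \<forall>S \<subseteq> U. card St \<ge> n3 \<and> int (card S) > int (card U) - int (card St) \<longrightarrow>
                card (nbrR E S \<inter> St) > s"
  shows "has_matching_covering E' Ut"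
proof -
  have fin: "finite Ut" "finite U" and E'_sub: "E' \<subseteq> Ut \<times> U"
    using B' by (auto simp: bip_graph_def)
  then have "finite E'" by (meson finite_SigmaI finite_subset)
  have "hall_condition E' Ut"
    unfolding hall_condition_def
  proof (intro allI impI, rule ccontr)
    fix St assume St: "St \<subseteq> Ut" and less: "\<not> card St \<le> card (nbrL E' St)"
    let ?N = "nbrL E' St"
    have "finite St" using St fin(1) by (rule finite_subset)
    have "St \<noteq> {}" using less by auto
    have "?N \<subseteq> U" using E'_sub by (auto simp: nbrL_def)
    consider "card St \<le> n2" | "n2 < card St" "card St < n3" | "n3 \<le> card St" by linarith
    then show False
    proof cases
      case 1
      then have "x * card St \<le> card ?N" using ii St by blast
      moreover have "card St \<le> x * card St" using pos(1) by simp
      ultimately show False using less by linarith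
    next
      case 2
      then have "x * n2 \<le> card ?N"
        using ii St \<open>finite St\<close> \<open>finite E'\<close> by (intro card_nbrL_ge_if_expanding_subsets) auto
      then have "real (edges_between E' St ?N) \<le> real n1 / real n3 * real (card St) * real (card ?N)"
        using 2 less by (intro iii[rule_format, OF St \<open>?N \<subseteq> U\<close>]) simp
      with i St have "n3 \<le> card ?N"
        by (intro card_nbrL_ge_if_sparse[OF \<open>finite St\<close> \<open>finite E'\<close> \<open>St \<noteq> {}\<close> pos(2)]) auto
      then show False using 2 less by linarith
    next
      case 3
      have "card ?N \<le> card U" using fin(2) \<open>?N \<subseteq> U\<close> by (rule card_mono)
      with less have "s < card (nbrR E (U - ?N) \<inter> St)"
        using 3 \<open>?N \<subseteq> U\<close> \<open>finite E'\<close>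
        by (intro iv[rule_format, OF St Diff_subset]) (simp add: card_Diff_subset finite_nbrL of_nat_diff)
      then show False using card_nbrR_outside_le_nd[OF fin(1) St, of E U E'] nd by linarith
    qed
  qed
  then obtain f where "inj_on f Ut" "\<forall>a\<in>Ut. (a, f a) \<in> E'"
    using hall_marriage[OF fin(1) \<open>finite E'\<close>] by blast
  then show ?thesis by (rule has_matching_covering_if_inj_on)
qed

end
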